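(* In the $\ell^2$ linear social choice setting, the maximum coordinate plurality rule has worst-case distortion $O(d^2)$.
   Context: Setting ($\ell^2$ linear social choice). Fix a dimension $d$. An instance consists of $n$ voters and $m$ candidates, each a vector in $\mathbb{R}^d_{\ge 0}$ with Euclidean norm $1$ (superscripts denote coordinates), with every voter vector in $\mathrm{Cone}(C)$ (nonnegative linear combinations of the candidate vectors $C$). Utility $u_v(c)=v^\top c$; each voter reports a ranking of $C$ consistent with its utilities (ties broken arbitrarily). $\mathrm{UW}(c)=\sum_v u_v(c)$. A rule may use the profile and the candidate vectors but not the voter vectors. Distortion on an instance: $\max_c\mathrm{UW}(c)/\mathrm{UW}(\text{output})$; worst-case distortion is the supremum over instances, as a function of $d$. Maximum coordinate plurality: form $\hat C\subseteq C$ containing, for each $i\in[d]$, one candidate maximizing the coordinate $c^i$ over $C$ (so $|\hat C|\le d$); restrict rankings to $\hat C$ and output a plurality winner (a candidate of $\hat C$ ranked first among $\hat C$ by the most voters, ties arbitrary). *)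

theory Defs
  imports Complex_Main
begin

text \<open>Vectors in R^d are represented as functions nat => real, only coordinates i < d matter.
Voters and candidates are indexed by natural numbers (finite sets V, C).\<close>

definition ip :: "nat \<Rightarrow> (nat \<Rightarrow> real) \<Rightarrow> (nat \<Rightarrow> real) \<Rightarrow> real" where
  "ip d x y = (\<Sum>i<d. x i * y i)"

definition unit_nonneg :: "nat \<Rightarrow> (nat \<Rightarrow> real) \<Rightarrow> bool" where
  "unit_nonneg d x \<longleftrightarrow> (\<forall>i<d. 0 \<le> x i) \<and> sqrt (\<Sum>i<d. (x i)\<^sup>2) = 1"

definition in_cone :: "nat \<Rightarrow> nat set \<Rightarrow> (nat \<Rightarrow> nat \<Rightarrow> real) \<Rightarrow> (nat \<Rightarrow> real) \<Rightarrow> bool" where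
  "in_cone d C cv x \<longleftrightarrow> (\<exists>lam::nat \<Rightarrow> real. (\<forall>c\<in>C. 0 \<le> lam c) \<and>
      (\<forall>i<d. x i = (\<Sum>c\<in>C. lam c * cv c i)))"

definition instance_ok :: "nat \<Rightarrow> nat set \<Rightarrow> nat set \<Rightarrow> (nat \<Rightarrow> nat \<Rightarrow> real) \<Rightarrow> (nat \<Rightarrow> nat \<Rightarrow> real) \<Rightarrow> bool" where
  "instance_ok d V C vv cv \<longleftrightarrow> finite V \<and> V \<noteq> {} \<and> finite C \<and> C \<noteq> {} \<and>
     (\<forall>c\<in>C. unit_nonneg d (cv c)) \<and> (\<forall>v\<in>V. unit_nonneg d (vv v)) \<and>
     (\<forall>v\<in>V. in_cone d C cv (vv v))"

definition utility :: "nat \<Rightarrow> (nat \<Rightarrow> nat \<Rightarrow> real) \<Rightarrow> (nat \<Rightarrow> nat \<Rightarrow> real) \<Rightarrow> nat \<Rightarrow> nat \<Rightarrow> real" where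
  "utility d vv cv v c = ip d (vv v) (cv c)"

definition UW :: "nat \<Rightarrow> nat set \<Rightarrow> (nat \<Rightarrow> nat \<Rightarrow> real) \<Rightarrow> (nat \<Rightarrow> nat \<Rightarrow> real) \<Rightarrow> nat \<Rightarrow> real" where
  "UW d V vv cv c = (\<Sum>v\<in>V. utility d vv cv v c)"

text \<open>A profile: rank v c is the position (0 = top) of candidate c in voter v's ranking;
each ranking is a bijection C -> {0..<|C|}, consistent with utilities (ties broken arbitrarily).\<close>
definition consistent_profile :: "nat \<Rightarrow> nat set \<Rightarrow> nat set \<Rightarrow> (nat \<Rightarrow> nat \<Rightarrow> real) \<Rightarrow> (nat \<Rightarrow> nat \<Rightarrow> real)
      \<Rightarrow> (nat \<Rightarrow> nat \<Rightarrow> nat) \<Rightarrow> bool" where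
  "consistent_profile d V C vv cv rank \<longleftrightarrow>
     (\<forall>v\<in>V. bij_betw (rank v) C {0..<card C} \<and>
        (\<forall>c\<in>C. \<forall>c'\<in>C. utility d vv cv v c > utility d vv cv v c' \<longrightarrow> rank v c < rank v c'))"

definition max_coord_selection :: "nat \<Rightarrow> nat set \<Rightarrow> (nat \<Rightarrow> nat \<Rightarrow> real) \<Rightarrow> (nat \<Rightarrow> nat) \<Rightarrow> bool" where
  "max_coord_selection d C cv sel \<longleftrightarrow>
     (\<forall>i<d. sel i \<in> C \<and> (\<forall>c\<in>C. cv c i \<le> cv (sel i) i))"

definition top_among :: "(nat \<Rightarrow> nat \<Rightarrow> nat) \<Rightarrow> nat set \<Rightarrow> nat \<Rightarrow> nat \<Rightarrow> bool" where
  "top_among rank S v c \<longleftrightarrow> c \<in> S \<and> (\<forall>c'\<in>S. rank v c \<le> rank v c')"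

definition plurality_score :: "nat set \<Rightarrow> (nat \<Rightarrow> nat \<Rightarrow> nat) \<Rightarrow> nat set \<Rightarrow> nat \<Rightarrow> nat" where
  "plurality_score V rank S c = card {v\<in>V. top_among rank S v c}"

definition plurality_winner :: "nat set \<Rightarrow> (nat \<Rightarrow> nat \<Rightarrow> nat) \<Rightarrow> nat set \<Rightarrow> nat \<Rightarrow> bool" where
  "plurality_winner V rank S w \<longleftrightarrow> w \<in> S \<and>
     (\<forall>c\<in>S. plurality_score V rank S c \<le> plurality_score V rank S w)"

text \<open>w is a possible output of maximum coordinate plurality (for some choice of hat C and ties).\<close>
definition max_coord_plurality_output :: "nat \<Rightarrow> nat set \<Rightarrow> nat set \<Rightarrow> (nat \<Rightarrow> nat \<Rightarrow> real)
      \<Rightarrow> (nat \<Rightarrow> nat \<Rightarrow> nat) \<Rightarrow> (nat \<Rightarrow> nat) \<Rightarrow> nat \<Rightarrow> bool" where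
  "max_coord_plurality_output d V C cv rank sel w \<longleftrightarrow>
     max_coord_selection d C cv sel \<and> plurality_winner V rank (sel ` {..<d}) w"

end

theory Submission
  imports Defs
begin

text \<open>Let \<open>m\<close> be the vector of coordinatewise maxima over the candidates, so that \<open>m\<^sub>i\<close> is
  the \<open>i\<close>-th coordinate of the selected candidate \<open>s\<^sub>i\<close>. Write a voter as \<open>x = \<Sum>\<^sub>c \<lambda>\<^sub>c c\<close> and
  put \<open>L = \<Sum>\<^sub>c \<lambda>\<^sub>c\<close>. From \<open>c\<^sub>i\<^sup>2 \<le> m\<^sub>i c\<^sub>i\<close> we get \<open>L \<le> \<langle>x,m\<rangle>\<close>, and from \<open>\<langle>x,c\<rangle> \<le> \<langle>x,m\<rangle>\<close> we get
  \<open>1 = \<langle>x,x\<rangle> \<le> L \<langle>x,m\<rangle>\<close>; hence \<open>\<langle>x,m\<rangle> \<ge> 1\<close>. As \<open>\<langle>x,m\<rangle> \<le> \<Sum>\<^sub>i u\<^sub>x(s\<^sub>i)\<close>, a voter whose favourite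
  among the \<open>s\<^sub>i\<close> is \<open>w\<close> has \<open>u\<^sub>x(w) \<ge> 1/d\<close>. The plurality winner among these at most \<open>d\<close>
  candidates has at least \<open>n/d\<close> such voters, so \<open>UW(w) \<ge> n/d\<^sup>2\<close>, whereas \<open>UW(c) \<le> n\<close> for
  every candidate by Cauchy-Schwarz.\<close>

lemma unit_nonneg_sum_squares: "unit_nonneg d x \<Longrightarrow> (\<Sum>i<d. (x i)\<^sup>2) = 1"
  unfolding unit_nonneg_def by simp

lemma ip_commute: "ip d x y = ip d y x"
  unfolding ip_def by (simp add: mult.commute)

lemma ip_self: "ip d x x = (\<Sum>i<d. (x i)\<^sup>2)"
  unfolding ip_def by (simp add: power2_eq_square)

lemma ip_nonneg:
  assumes "\<forall>i<d. 0 \<le> x i" "\<forall>i<d. 0 \<le> y i"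
  shows "0 \<le> ip d x y"
  using assms unfolding ip_def by (auto intro!: sum_nonneg)

lemma ip_ge_coordinate_product:
  assumes "\<forall>j<d. 0 \<le> x j" "\<forall>j<d. 0 \<le> y j" "i < d"
  shows "x i * y i \<le> ip d x y"
  unfolding ip_def by (rule member_le_sum) (use assms in auto)

lemma ip_unit_le_one:
  assumes "unit_nonneg d x" "unit_nonneg d y"
  shows "ip d x y \<le> 1"
proof -
  have "ip d x y \<le> (\<Sum>i<d. ((x i)\<^sup>2 + (y i)\<^sup>2) / 2)"
    unfolding ip_def
    by (intro sum_mono) (use sum_squares_bound[where 'a=real] in \<open>simp add: power2_eq_square mult_ac\<close>)
  also have "\<dots> = ((\<Sum>i<d. (x i)\<^sup>2) + (\<Sum>i<d. (y i)\<^sup>2)) / 2"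
    by (simp add: sum.distrib sum_divide_distrib[symmetric])
  finally show ?thesis
    using assms by (simp add: unit_nonneg_sum_squares)
qed

lemma ip_cone_combination:
  assumes "\<forall>i<d. x i = (\<Sum>c\<in>C. lam c * cv c i)"
  shows "ip d y x = (\<Sum>c\<in>C. lam c * ip d y (cv c))"
proof -
  have "ip d y x = (\<Sum>i<d. y i * (\<Sum>c\<in>C. lam c * cv c i))"
    unfolding ip_def using assms by simp
  also have "\<dots> = (\<Sum>c\<in>C. lam c * ip d y (cv c))"
    unfolding ip_def
    by (simp add: sum_distrib_left sum_distrib_right mult_ac sum.swap[of _ C])
  finally show ?thesis .
qed

lemma in_cone_ip_coordinate_bound_ge_one:
  assumes units: "\<forall>c\<in>C. unit_nonneg d (cv c)" and x: "unit_nonneg d x" "in_cone d C cv x"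
    and bound: "\<forall>c\<in>C. \<forall>i<d. cv c i \<le> m i"
  shows "1 \<le> ip d x m"
proof -
  obtain lam where lam_nonneg: "\<forall>c\<in>C. 0 \<le> lam c"
    and x_eq: "\<forall>i<d. x i = (\<Sum>c\<in>C. lam c * cv c i)"
    using x(2) unfolding in_cone_def by blast
  define L where "L = (\<Sum>c\<in>C. lam c)"
  define M where "M = ip d x m"
  have cv_nonneg: "\<forall>i<d. 0 \<le> cv c i" if "c \<in> C" for c
    using units that unfolding unit_nonneg_def by blast
  have x_nonneg: "\<forall>i<d. 0 \<le> x i"
    using x(1) unfolding unit_nonneg_def by blast
  have "L = (\<Sum>c\<in>C. lam c * ip d (cv c) (cv c))"
    unfolding L_def using units by (simp add: ip_self unit_nonneg_sum_squares)
  also have "\<dots> \<le> (\<Sum>c\<in>C. lam c * ip d m (cv c))"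
    using lam_nonneg bound cv_nonneg unfolding ip_def
    by (intro sum_mono mult_left_mono) (auto simp: mult_right_mono)
  also have "\<dots> = M"
    unfolding M_def by (simp add: ip_commute[of d x] ip_cone_combination[OF x_eq])
  finally have L_le_M: "L \<le> M" .
  have "1 = (\<Sum>c\<in>C. lam c * ip d x (cv c))"
    using x(1) by (simp add: ip_self unit_nonneg_sum_squares ip_cone_combination[OF x_eq, symmetric])
  also have "\<dots> \<le> (\<Sum>c\<in>C. lam c * M)"
    using lam_nonneg bound x_nonneg unfolding M_def ip_def
    by (intro sum_mono mult_left_mono) (auto simp: mult_left_mono)
  also have "\<dots> = L * M"
    unfolding L_def by (simp add: sum_distrib_right)
  finally have "1 \<le> L * M" .
  moreover have "0 \<le> L"
    unfolding L_def using lam_nonneg by (simp add: sum_nonneg)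
  ultimately have "0 < M"
    by (smt (verit) mult_nonneg_nonpos)
  with \<open>1 \<le> L * M\<close> L_le_M have "1 \<le> M * M"
    by (smt (verit) mult_right_mono)
  with \<open>0 < M\<close> show ?thesis
    unfolding M_def by (smt (verit) mult_le_cancel_left1)
qed

lemma top_among_exists:
  assumes "s \<in> S"
  shows "\<exists>t. top_among rank S v t"
  using ex_has_least_nat[of "\<lambda>s. s \<in> S" s "rank v"] assms unfolding top_among_def by blast

lemma card_le_card_mult_plurality_score:
  assumes "finite V" "finite S" "plurality_winner V rank S w"
  shows "card V \<le> card S * plurality_score V rank S w"
proof -
  have "V = (\<Union>s\<in>S. {v\<in>V. top_among rank S v s})"
    using top_among_exists[of w S rank] assms(3) unfolding plurality_winner_def top_among_def
    by blast
  then have "card V \<le> (\<Sum>s\<in>S. plurality_score V rank S s)"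
    unfolding plurality_score_def by (metis card_UN_le[OF assms(2)])
  also have "\<dots> \<le> (\<Sum>s\<in>S. plurality_score V rank S w)"
    using assms(3) unfolding plurality_winner_def by (intro sum_mono) auto
  finally show ?thesis by simp
qed

lemma utility_le_utility_top_among:
  assumes "consistent_profile d V C vv cv rank" "v \<in> V" "S \<subseteq> C"
    and "top_among rank S v w" "s \<in> S"
  shows "utility d vv cv v s \<le> utility d vv cv v w"
  using assms unfolding consistent_profile_def top_among_def by (meson leD not_le subsetD)

lemma utility_top_among_max_coord_ge:
  assumes inst: "instance_ok d V C vv cv" and profile: "consistent_profile d V C vv cv rank"
    and sel: "max_coord_selection d C cv sel"
    and v: "v \<in> V" and top: "top_among rank (sel ` {..<d}) v w"
  shows "1 \<le> real d * utility d vv cv v w"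
proof -
  have units: "\<forall>c\<in>C. unit_nonneg d (cv c)" and voter: "unit_nonneg d (vv v)" "in_cone d C cv (vv v)"
    using inst v unfolding instance_ok_def by auto
  have sel_C: "sel i \<in> C" if "i < d" for i
    using sel that unfolding max_coord_selection_def by blast
  have "1 \<le> ip d (vv v) (\<lambda>i. cv (sel i) i)"
    using sel by (intro in_cone_ip_coordinate_bound_ge_one[OF units voter])
      (auto simp: max_coord_selection_def)
  also have "\<dots> \<le> (\<Sum>i<d. utility d vv cv v (sel i))"
    unfolding ip_def[of d "vv v" "\<lambda>i. cv (sel i) i"] utility_def
  proof (intro sum_mono)
    fix i assume "i \<in> {..<d}"
    then show "vv v i * cv (sel i) i \<le> ip d (vv v) (cv (sel i))"
      using voter(1) units sel_C by (intro ip_ge_coordinate_product) (auto simp: unit_nonneg_def)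
  qed
  also have "\<dots> \<le> (\<Sum>i<d. utility d vv cv v w)"
    using sel_C by (intro sum_mono) (auto intro: utility_le_utility_top_among[OF profile v _ top])
  finally show ?thesis by simp
qed

lemma UW_le_card:
  assumes "instance_ok d V C vv cv" "c \<in> C"
  shows "UW d V vv cv c \<le> card V"
proof -
  have "UW d V vv cv c \<le> (\<Sum>v\<in>V. 1)"
    using assms unfolding UW_def utility_def instance_ok_def by (intro sum_mono ip_unit_le_one) auto
  then show ?thesis by simp
qed

lemma card_le_UW_max_coord_plurality:
  assumes inst: "instance_ok d V C vv cv" and profile: "consistent_profile d V C vv cv rank"
    and outcome: "max_coord_plurality_output d V C cv rank sel w"
  shows "card V \<le> (real d)\<^sup>2 * UW d V vv cv w"
proof -
  define S where "S = sel ` {..<d}"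
  define supporters where "supporters = {v\<in>V. top_among rank S v w}"
  have sel: "max_coord_selection d C cv sel" and winner: "plurality_winner V rank S w"
    using outcome unfolding max_coord_plurality_output_def S_def by auto
  have "finite V" and units: "\<forall>c\<in>C. unit_nonneg d (cv c)" "\<forall>v\<in>V. unit_nonneg d (vv v)"
    using inst unfolding instance_ok_def by auto
  have "w \<in> C"
    using sel winner unfolding S_def plurality_winner_def max_coord_selection_def by auto
  have "card V \<le> card S * card supporters"
    using card_le_card_mult_plurality_score[OF \<open>finite V\<close> _ winner]
    unfolding S_def supporters_def plurality_score_def by simp
  also have "\<dots> \<le> d * card supporters"
    unfolding S_def by (intro mult_right_mono) (auto intro: card_image_le[THEN order_trans])
  finally have "real (card V) \<le> real d * (\<Sum>v\<in>supporters. 1)"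
    by (simp flip: of_nat_mult)
  also have "\<dots> \<le> real d * (\<Sum>v\<in>supporters. real d * utility d vv cv v w)"
    using utility_top_among_max_coord_ge[OF inst profile sel]
    unfolding supporters_def S_def by (intro mult_left_mono sum_mono) auto
  also have "\<dots> = (real d)\<^sup>2 * (\<Sum>v\<in>supporters. utility d vv cv v w)"
    by (simp add: sum_distrib_left power2_eq_square mult.assoc)
  also have "\<dots> \<le> (real d)\<^sup>2 * UW d V vv cv w"
    unfolding UW_def supporters_def utility_def
    using \<open>finite V\<close> units \<open>w \<in> C\<close>
    by (intro mult_left_mono sum_mono2 ip_nonneg) (auto simp: unit_nonneg_def)
  finally show ?thesis .
qed

theorem theorem14:
  shows "\<exists>K::real. \<forall>d::nat. \<forall>V C vv cv rank sel w.
     instance_ok d V C vv cv \<and> consistent_profile d V C vv cv rank \<and>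
     max_coord_plurality_output d V C cv rank sel w \<longrightarrow>
     (\<forall>c\<in>C. UW d V vv cv c \<le> K * (real d)\<^sup>2 * UW d V vv cv w)"
proof (intro exI[of _ 1] allI impI ballI)
  fix d V C vv cv rank sel w c
  assume "instance_ok d V C vv cv \<and> consistent_profile d V C vv cv rank \<and>
     max_coord_plurality_output d V C cv rank sel w" and "c \<in> C"
  then have "UW d V vv cv c \<le> card V" and "card V \<le> (real d)\<^sup>2 * UW d V vv cv w"
    using UW_le_card card_le_UW_max_coord_plurality by blast+
  then show "UW d V vv cv c \<le> 1 * (real d)\<^sup>2 * UW d V vv cv w"
    by simp
qed

end
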